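(* For every $n\ge1$, $$\sum_{\sigma\in\mathfrak S_n}(xy)^{{\rm L}(\sigma)}\Bigl(\frac{x+y}{2}\Bigr)^{n-2{\rm L}(\sigma)}\beta^{{\rm RLmin}(\sigma)}=\sum_{k=1}^n\binom nk\frac{(\beta(y-x))^{n-k}}{2^{n-k}}\Bigl(\sum_{\sigma\in\mathfrak S_k}x^{{\rm des}(\sigma)+1}y^{{\rm asc}(\sigma)}\beta^{{\rm LRmin}(\sigma)}\Bigr)+\Bigl(\frac{\beta(y-x)}{2}\Bigr)^n.$$
   Context: For $\sigma=\sigma_1\cdots\sigma_m\in\mathfrak S_m$: ${\rm asc}(\sigma)$, ${\rm des}(\sigma)$ are the numbers of $i\in[m-1]$ with $\sigma_i<\sigma_{i+1}$, resp. $\sigma_i>\sigma_{i+1}$; ${\rm L}(\sigma)$ is the number of $i$ with $1\le i<m$ and $\sigma_{i-1}<\sigma_i>\sigma_{i+1}$ (convention $\sigma_0=0$); ${\rm LRmin}(\sigma)$ is the number of $i$ with $\sigma_j>\sigma_i$ for all $j<i$; ${\rm RLmin}(\sigma)$ is the number of $i$ with $\sigma_j>\sigma_i$ for all $j>i$. *)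

theory Defs
  imports Complex_Main "HOL-Combinatorics.Multiset_Permutations"
begin

text \<open>A permutation of [m] is represented as a list sigma_1 ... sigma_m
  (an element of permutations_of_set {1..m}). Entry i (1-indexed) is
  perm_at xs i; the convention sigma_0 = 0 is built in.\<close>

definition perm_at :: "nat list \<Rightarrow> nat \<Rightarrow> nat" where
  "perm_at xs i = (if i = 0 then 0 else xs ! (i - 1))"

definition asc :: "nat list \<Rightarrow> nat" where
  "asc xs = card {i \<in> {1..<length xs}. perm_at xs i < perm_at xs (i + 1)}"

definition des :: "nat list \<Rightarrow> nat" where
  "des xs = card {i \<in> {1..<length xs}. perm_at xs i > perm_at xs (i + 1)}"

definition lpk :: "nat list \<Rightarrow> nat" where
  "lpk xs = card {i \<in> {1..<length xs}.
      perm_at xs (i - 1) < perm_at xs i \<and> perm_at xs i > perm_at xs (i + 1)}"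

definition LRmin :: "nat list \<Rightarrow> nat" where
  "LRmin xs = card {i \<in> {1..length xs}. \<forall>j \<in> {1..<i}. perm_at xs j > perm_at xs i}"

definition RLmin :: "nat list \<Rightarrow> nat" where
  "RLmin xs = card {i \<in> {1..length xs}. \<forall>j \<in> {i<..length xs}. perm_at xs j > perm_at xs i}"

end

theory Submission
  imports Defs "HOL-Analysis.Derivative"
begin

(*
  Write A_k(x,y) for the sum of x^(des+1) y^asc beta^LRmin over the permutations of [k] (A_0 = 1),
  P_n(x,y) for the left-hand side and D = d/dx + d/dy.  Every permutation of [n+1] arises exactly
  once by inserting n+1 into a permutation of [n], and tracking how des, asc, LRmin, lpk and RLmin
  change under this insertion gives
    A_(k+1) = beta x A_k + x y D A_k    and    P_(n+1) = beta (x+y)/2 P_n + x y D P_n.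
  Since D annihilates y - x, Pascal's rule shows that the right-hand side
  B_n = sum_k (n choose k) (beta (y-x)/2)^(n-k) A_k obeys the recurrence of P_n, and P_0 = B_0 = 1.
*)

lemma mem_Suc_image_iff: "0 < j \<Longrightarrow> j \<in> Suc ` X \<longleftrightarrow> j - 1 \<in> X"
  by (cases j) auto

lemma card_filter_point: "card {j \<in> S. i \<le> j \<and> j \<le> (i::nat)} = of_bool (i \<in> S)"
proof -
  have "{j \<in> S. i \<le> j \<and> j \<le> i} = (if i \<in> S then {i} else {})" by auto
  then show ?thesis by simp
qed

(* Positions before the gap are kept, those after it move up by one, those in a..b are lost
   and M is gained. *)
lemma card_splice:
  fixes S M :: "nat set"
  assumes "finite S" "finite M" "M \<subseteq> {a..Suc b}" "a \<le> Suc b"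
  shows "card ({j \<in> S. j < a} \<union> M \<union> Suc ` {j \<in> S. b < j}) + card {j \<in> S. a \<le> j \<and> j \<le> b}
       = card S + card M"
proof -
  let ?L = "{j \<in> S. j < a}" and ?C = "{j \<in> S. a \<le> j \<and> j \<le> b}" and ?R = "{j \<in> S. b < j}"
  have "card (?L \<union> M \<union> Suc ` ?R) = card (?L \<union> M) + card (Suc ` ?R)"
    by (rule card_Un_disjoint) (use assms in auto)
  also have "card (?L \<union> M) = card ?L + card M"
    by (rule card_Un_disjoint) (use assms in auto)
  also have "card (Suc ` ?R) = card ?R"
    by (simp add: card_image)
  moreover have "card (?L \<union> ?C \<union> ?R) = card (?L \<union> ?C) + card ?R"
    by (rule card_Un_disjoint) (use assms in auto)
  moreover have "card (?L \<union> ?C) = card ?L + card ?C"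
    by (rule card_Un_disjoint) (use assms in auto)
  moreover have "?L \<union> ?C \<union> ?R = S"
    using assms(4) by auto
  ultimately show ?thesis by simp
qed

lemma sum_card_Int_consecutive:
  fixes P :: "nat set"
  assumes "P \<subseteq> {1..<n}"
  shows "(\<Sum>i<n. card (P \<inter> {i, Suc i})) = 2 * card P"
proof -
  have "card (P \<inter> {i, Suc i}) = of_bool (i \<in> P) + of_bool (Suc i \<in> P)" for i
    by (cases "i \<in> P"; cases "Suc i \<in> P") (auto simp: Int_insert_right)
  moreover have "{..<n} \<inter> {i. i \<in> P} = P"
    using assms by auto
  moreover have "{..<n} \<inter> {i. Suc i \<in> P} = (\<lambda>j. j - 1) ` P"
    using assms by (force simp: subset_iff image_iff)
  moreover have "card ((\<lambda>j. j - 1) ` P) = card P"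
  proof (intro card_image inj_onI)
    fix a b assume "a \<in> P" "b \<in> P" "a - 1 = b - 1"
    moreover have "0 < a" "0 < b" using assms \<open>a \<in> P\<close> \<open>b \<in> P\<close> by auto
    ultimately show "a = b" by simp
  qed
  ultimately show ?thesis
    by (simp add: sum.distrib)
qed

lemma length_permutation:
  "\<sigma> \<in> permutations_of_set {1..n} \<Longrightarrow> length \<sigma> = n"
  by (simp add: length_finite_permutations_of_set)

lemma perm_at_range:
  assumes "\<sigma> \<in> permutations_of_set {1..n}" "1 \<le> j" "j \<le> n"
  shows "perm_at \<sigma> j \<in> {1..n}"
proof -
  have "\<sigma> ! (j - 1) \<in> set \<sigma>"
    using assms length_permutation[OF assms(1)] by simp
  then show ?thesis
    using permutations_of_setD(1)[OF assms(1)] assms(2) by (simp add: perm_at_def)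
qed

lemma perm_at_neq_Suc:
  assumes "\<sigma> \<in> permutations_of_set {1..n}" "1 \<le> j" "j < n"
  shows "perm_at \<sigma> j \<noteq> perm_at \<sigma> (Suc j)"
  using assms permutations_of_setD(2)[OF assms(1)] length_permutation[OF assms(1)]
  by (simp add: perm_at_def nth_eq_iff_index_eq)

definition insert_at :: "nat \<Rightarrow> 'a \<Rightarrow> 'a list \<Rightarrow> 'a list" where
  "insert_at i a xs = take i xs @ a # drop i xs"

lemma length_insert_at [simp]: "i \<le> length xs \<Longrightarrow> length (insert_at i a xs) = Suc (length xs)"
  by (simp add: insert_at_def)

lemma mset_insert_at: "mset (insert_at i a xs) = add_mset a (mset xs)"
proof -
  have "mset (insert_at i a xs) = add_mset a (mset (take i xs @ drop i xs))"
    unfolding insert_at_def mset_append by simp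
  then show ?thesis by simp
qed

lemma set_insert_at [simp]: "set (insert_at i a xs) = insert a (set xs)"
  by (metis mset_insert_at set_mset_mset set_mset_add_mset_insert)

lemma distinct_insert_at [simp]: "distinct (insert_at i a xs) \<longleftrightarrow> a \<notin> set xs \<and> distinct xs"
  by (metis mset_insert_at mset.simps(2) mset_eq_imp_distinct_iff distinct.simps(2))

lemma perm_at_insert_at:
  assumes "i \<le> length xs"
  shows "perm_at (insert_at i a xs) j =
    (if j \<le> i then perm_at xs j else if j = Suc i then a else perm_at xs (j - 1))"
  using assms
  by (cases j) (auto simp: perm_at_def insert_at_def nth_append min_def nth_Cons' split: nat.split)

lemma insert_at_eq_iff:
  assumes "a \<notin> set xs" "i \<le> length xs" "j \<le> length ys"
  shows "insert_at i a xs = insert_at j a ys \<longleftrightarrow> xs = ys \<and> i = j"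
proof -
  have "a \<notin> set (take i xs)" "a \<notin> set (drop i xs)"
    using assms(1) by (auto dest: in_set_takeD in_set_dropD)
  then have "insert_at i a xs = insert_at j a ys \<longleftrightarrow> take i xs = take j ys \<and> drop i xs = drop j ys"
    unfolding insert_at_def by (rule append_Cons_eq_iff)
  also have "\<dots> \<longleftrightarrow> xs = ys \<and> i = j"
  proof
    assume eq: "take i xs = take j ys \<and> drop i xs = drop j ys"
    then have "xs = ys" by (metis append_take_drop_id)
    moreover have "length (take i xs) = length (take j ys)" using eq by simp
    ultimately show "xs = ys \<and> i = j"
      using assms(2,3) by simp
  qed simp
  finally show ?thesis .
qed

lemma bij_betw_insert_max:
  "bij_betw (\<lambda>(\<sigma>, i). insert_at i (Suc n) \<sigma>)
     (permutations_of_set {1..n} \<times> {..n}) (permutations_of_set {1..Suc n})"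
proof (rule bij_betwI')
  fix p q assume "p \<in> permutations_of_set {1..n} \<times> {..n}" "q \<in> permutations_of_set {1..n} \<times> {..n}"
  then show "((\<lambda>(\<sigma>, i). insert_at i (Suc n) \<sigma>) p = (\<lambda>(\<sigma>, i). insert_at i (Suc n) \<sigma>) q) = (p = q)"
    by (auto simp: insert_at_eq_iff length_permutation permutations_of_setD)
next
  fix p assume "p \<in> permutations_of_set {1..n} \<times> {..n}"
  then show "(\<lambda>(\<sigma>, i). insert_at i (Suc n) \<sigma>) p \<in> permutations_of_set {1..Suc n}"
    by (auto simp: length_permutation permutations_of_set_def)
next
  fix \<tau> assume \<tau>: "\<tau> \<in> permutations_of_set {1..Suc n}"
  then have "Suc n \<in> set \<tau>" by (simp add: permutations_of_setD)
  then obtain as bs where \<tau>_eq: "\<tau> = as @ Suc n # bs" by (meson split_list)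
  have "distinct (as @ bs)" "Suc n \<notin> set (as @ bs)"
    using permutations_of_setD(2)[OF \<tau>] \<tau>_eq by auto
  moreover have "set (as @ bs) = set \<tau> - {Suc n}"
    using \<tau>_eq calculation(2) by auto
  ultimately have "as @ bs \<in> permutations_of_set {1..n}"
    using permutations_of_setD(1)[OF \<tau>] by (auto intro: permutations_of_setI)
  moreover have "length as \<le> n"
    using length_permutation[OF \<tau>] \<tau>_eq by simp
  moreover have "\<tau> = insert_at (length as) (Suc n) (as @ bs)"
    using \<tau>_eq by (simp add: insert_at_def)
  ultimately show "\<exists>p \<in> permutations_of_set {1..n} \<times> {..n}. \<tau> = (\<lambda>(\<sigma>, i). insert_at i (Suc n) \<sigma>) p"
    by force
qed

lemma sum_permutations_insert_max:
  "(\<Sum>\<tau>\<in>permutations_of_set {1..Suc n}. f \<tau>) =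
   (\<Sum>\<sigma>\<in>permutations_of_set {1..n}. \<Sum>i\<le>n. f (insert_at i (Suc n) \<sigma>))"
  using sum.reindex_bij_betw[OF bij_betw_insert_max, of f]
  by (simp add: sum.cartesian_product case_prod_unfold)

definition descent_set :: "nat list \<Rightarrow> nat set" where
  "descent_set \<sigma> = {i \<in> {1..<length \<sigma>}. perm_at \<sigma> i > perm_at \<sigma> (i + 1)}"

definition ascent_set :: "nat list \<Rightarrow> nat set" where
  "ascent_set \<sigma> = {i \<in> {1..<length \<sigma>}. perm_at \<sigma> i < perm_at \<sigma> (i + 1)}"

definition left_peak_set :: "nat list \<Rightarrow> nat set" where
  "left_peak_set \<sigma> = {i \<in> {1..<length \<sigma>}.
      perm_at \<sigma> (i - 1) < perm_at \<sigma> i \<and> perm_at \<sigma> i > perm_at \<sigma> (i + 1)}"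

definition lr_min_set :: "nat list \<Rightarrow> nat set" where
  "lr_min_set \<sigma> = {i \<in> {1..length \<sigma>}. \<forall>j \<in> {1..<i}. perm_at \<sigma> j > perm_at \<sigma> i}"

definition rl_min_set :: "nat list \<Rightarrow> nat set" where
  "rl_min_set \<sigma> = {i \<in> {1..length \<sigma>}. \<forall>j \<in> {i<..length \<sigma>}. perm_at \<sigma> j > perm_at \<sigma> i}"

lemma des_eq_card_descent_set: "des \<sigma> = card (descent_set \<sigma>)"
  by (simp add: des_def descent_set_def)

lemma asc_eq_card_ascent_set: "asc \<sigma> = card (ascent_set \<sigma>)"
  by (simp add: asc_def ascent_set_def)

lemma lpk_eq_card_left_peak_set: "lpk \<sigma> = card (left_peak_set \<sigma>)"
  by (simp add: lpk_def left_peak_set_def)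

lemma LRmin_eq_card_lr_min_set: "LRmin \<sigma> = card (lr_min_set \<sigma>)"
  by (simp add: LRmin_def lr_min_set_def)

lemma RLmin_eq_card_rl_min_set: "RLmin \<sigma> = card (rl_min_set \<sigma>)"
  by (simp add: RLmin_def rl_min_set_def)

lemma ascent_set_eq_diff_descent_set:
  assumes "\<sigma> \<in> permutations_of_set {1..n}"
  shows "ascent_set \<sigma> = {1..<n} - descent_set \<sigma>"
  using perm_at_neq_Suc[OF assms] length_permutation[OF assms]
  by (fastforce simp: ascent_set_def descent_set_def)

lemma Suc_notin_left_peak_set: "i \<in> left_peak_set \<sigma> \<Longrightarrow> Suc i \<notin> left_peak_set \<sigma>"
  by (auto simp: left_peak_set_def)

lemma card_left_peak_set_consecutive_le: "card (left_peak_set \<sigma> \<inter> {i, Suc i}) \<le> 1"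
  using Suc_notin_left_peak_set[of i \<sigma>]
  by (cases "i \<in> left_peak_set \<sigma>"; cases "Suc i \<in> left_peak_set \<sigma>") (auto simp: Int_insert_right)

lemma two_lpk_le_length: "2 * lpk \<sigma> \<le> length \<sigma>"
proof -
  have "left_peak_set \<sigma> \<subseteq> {1..<length \<sigma>}"
    by (auto simp: left_peak_set_def)
  then have "2 * lpk \<sigma> = (\<Sum>i<length \<sigma>. card (left_peak_set \<sigma> \<inter> {i, Suc i}))"
    by (simp add: lpk_eq_card_left_peak_set sum_card_Int_consecutive)
  also have "\<dots> \<le> (\<Sum>i<length \<sigma>. 1)"
    by (rule sum_mono) (rule card_left_peak_set_consecutive_le)
  finally show ?thesis by simp
qed

locale max_insertion =
  fixes \<sigma> :: "nat list" and n i :: nat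
  assumes perm: "\<sigma> \<in> permutations_of_set {1..n}" and pos: "i \<le> n"
begin

abbreviation \<tau> :: "nat list" where
  "\<tau> \<equiv> insert_at i (Suc n) \<sigma>"

lemma length_\<sigma> [simp]: "length \<sigma> = n"
  using perm by (rule length_permutation)

lemma length_\<tau> [simp]: "length \<tau> = Suc n"
  using pos by simp

lemma perm_at_before: "j \<le> i \<Longrightarrow> perm_at \<tau> j = perm_at \<sigma> j"
  using pos by (simp add: perm_at_insert_at)

lemma perm_at_inserted: "perm_at \<tau> (Suc i) = Suc n"
  using pos by (simp add: perm_at_insert_at)

lemma perm_at_after: "Suc i < j \<Longrightarrow> perm_at \<tau> j = perm_at \<sigma> (j - 1)"
  using pos by (simp add: perm_at_insert_at)

lemma perm_at_less_max: "j \<le> n \<Longrightarrow> perm_at \<sigma> j < Suc n"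
  using perm_at_range[OF perm, of j] by (cases "j = 0") (auto simp: perm_at_def)

lemma descent_set_insert:
  "descent_set \<tau> = {j \<in> descent_set \<sigma>. j < i} \<union> (if i < n then {Suc i} else {})
     \<union> Suc ` {j \<in> descent_set \<sigma>. i < j}"
proof (rule set_eqI)
  fix j
  consider "j < i" | "j = i" | "j = Suc i" | "Suc i < j" by linarith
  then show "j \<in> descent_set \<tau> \<longleftrightarrow> j \<in> {j \<in> descent_set \<sigma>. j < i} \<union> (if i < n then {Suc i} else {})
     \<union> Suc ` {j \<in> descent_set \<sigma>. i < j}"
  proof cases
    case 1 then show ?thesis
      using pos by (auto simp: descent_set_def perm_at_before mem_Suc_image_iff)
  next
    case 2 then show ?thesis
      using pos perm_at_less_max[of i]
      by (auto simp: descent_set_def perm_at_before perm_at_inserted mem_Suc_image_iff)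
  next
    case 3 then show ?thesis
      using perm_at_less_max[of "Suc i"]
      by (auto simp: descent_set_def perm_at_inserted perm_at_after mem_Suc_image_iff)
  next
    case 4 then show ?thesis
      by (auto simp: descent_set_def perm_at_after mem_Suc_image_iff)
  qed
qed

lemma ascent_set_insert:
  "ascent_set \<tau> = {j \<in> ascent_set \<sigma>. j < i} \<union> (if 0 < i then {i} else {})
     \<union> Suc ` {j \<in> ascent_set \<sigma>. i < j}"
proof (rule set_eqI)
  fix j
  consider "j < i" | "j = i" | "j = Suc i" | "Suc i < j" by linarith
  then show "j \<in> ascent_set \<tau> \<longleftrightarrow> j \<in> {j \<in> ascent_set \<sigma>. j < i} \<union> (if 0 < i then {i} else {})
     \<union> Suc ` {j \<in> ascent_set \<sigma>. i < j}"
  proof cases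
    case 1 then show ?thesis
      using pos by (auto simp: ascent_set_def perm_at_before mem_Suc_image_iff)
  next
    case 2 then show ?thesis
      using pos perm_at_less_max[of i]
      by (auto simp: ascent_set_def perm_at_before perm_at_inserted mem_Suc_image_iff)
  next
    case 3 then show ?thesis
      using perm_at_less_max[of "Suc i"]
      by (auto simp: ascent_set_def perm_at_inserted perm_at_after mem_Suc_image_iff)
  next
    case 4 then show ?thesis
      by (auto simp: ascent_set_def perm_at_after mem_Suc_image_iff)
  qed
qed

lemma des_insert: "des \<tau> + of_bool (i \<in> descent_set \<sigma>) = des \<sigma> + of_bool (i < n)"
proof -
  have "finite (descent_set \<sigma>)" by (simp add: descent_set_def)
  from card_splice[OF this, of "if i < n then {Suc i} else {}" i i] show ?thesis
    unfolding des_eq_card_descent_set descent_set_insert card_filter_point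
    by simp
qed

lemma asc_insert: "asc \<tau> + of_bool (i \<in> ascent_set \<sigma>) = asc \<sigma> + of_bool (0 < i)"
proof -
  have "finite (ascent_set \<sigma>)" by (simp add: ascent_set_def)
  from card_splice[OF this, of "if 0 < i then {i} else {}" i i] show ?thesis
    unfolding asc_eq_card_ascent_set ascent_set_insert card_filter_point
    by simp
qed

lemma left_peak_set_insert:
  "left_peak_set \<tau> = {j \<in> left_peak_set \<sigma>. j < i} \<union> (if i < n then {Suc i} else {})
     \<union> Suc ` {j \<in> left_peak_set \<sigma>. Suc i < j}"
proof (rule set_eqI)
  fix j
  consider "j < i" | "j = i" | "j = Suc i" | "j = Suc (Suc i)" | "Suc (Suc i) < j" by linarith
  then show "j \<in> left_peak_set \<tau> \<longleftrightarrow> j \<in> {j \<in> left_peak_set \<sigma>. j < i} \<union> (if i < n then {Suc i} else {})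
     \<union> Suc ` {j \<in> left_peak_set \<sigma>. Suc i < j}"
  proof cases
    case 1 then show ?thesis
      using pos by (auto simp: left_peak_set_def perm_at_before mem_Suc_image_iff)
  next
    case 2 then show ?thesis
      using pos perm_at_less_max[of i]
      by (auto simp: left_peak_set_def perm_at_before perm_at_inserted mem_Suc_image_iff)
  next
    case 3
    have "perm_at \<tau> i < Suc n"
      using pos perm_at_less_max[of i] by (simp add: perm_at_before)
    moreover have "i < n \<Longrightarrow> perm_at \<tau> (Suc (Suc i)) < Suc n"
      using perm_at_less_max[of "Suc i"] by (simp add: perm_at_after)
    ultimately show ?thesis
      using 3 by (auto simp: left_peak_set_def perm_at_inserted mem_Suc_image_iff)
  next
    case 4 then show ?thesis
      using perm_at_less_max[of "Suc i"]
      by (auto simp: left_peak_set_def perm_at_inserted perm_at_after mem_Suc_image_iff)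
  next
    case 5 then show ?thesis
      by (auto simp: left_peak_set_def perm_at_after mem_Suc_image_iff)
  qed
qed

lemma lr_min_set_before: "j \<le> i \<Longrightarrow> j \<in> lr_min_set \<tau> \<longleftrightarrow> j \<in> lr_min_set \<sigma>"
  using pos by (auto simp: lr_min_set_def perm_at_before)

lemma lr_min_set_inserted: "Suc i \<in> lr_min_set \<tau> \<longleftrightarrow> i = 0"
proof
  assume "Suc i \<in> lr_min_set \<tau>"
  then have min: "\<forall>k \<in> {1..<Suc i}. perm_at \<tau> k > perm_at \<tau> (Suc i)"
    by (simp add: lr_min_set_def)
  show "i = 0"
  proof (rule ccontr)
    assume "i \<noteq> 0"
    then have "perm_at \<tau> 1 > perm_at \<tau> (Suc i)" using min by simp
    moreover have "perm_at \<tau> 1 < Suc n"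
      using \<open>i \<noteq> 0\<close> pos perm_at_less_max[of 1] by (simp add: perm_at_before)
    ultimately show False by (simp add: perm_at_inserted)
  qed
qed (simp add: lr_min_set_def)

lemma lr_min_set_after:
  assumes "Suc i < j"
  shows "j \<in> lr_min_set \<tau> \<longleftrightarrow> j - 1 \<in> lr_min_set \<sigma>"
proof -
  have "(\<forall>k \<in> {1..<j}. perm_at \<tau> k > perm_at \<tau> j) \<longleftrightarrow>
        (\<forall>k \<in> {1..<j - 1}. perm_at \<sigma> k > perm_at \<sigma> (j - 1))" if "j \<le> Suc n"
  proof
    assume H: "\<forall>k \<in> {1..<j}. perm_at \<tau> k > perm_at \<tau> j"
    show "\<forall>k \<in> {1..<j - 1}. perm_at \<sigma> k > perm_at \<sigma> (j - 1)"
    proof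
      fix k assume k: "k \<in> {1..<j - 1}"
      show "perm_at \<sigma> k > perm_at \<sigma> (j - 1)"
      proof (cases "k \<le> i")
        case True then show ?thesis
          using H[rule_format, of k] k assms by (simp add: perm_at_before perm_at_after)
      next
        case False then show ?thesis
          using H[rule_format, of "Suc k"] k assms by (simp add: perm_at_after)
      qed
    qed
  next
    assume H: "\<forall>k \<in> {1..<j - 1}. perm_at \<sigma> k > perm_at \<sigma> (j - 1)"
    show "\<forall>k \<in> {1..<j}. perm_at \<tau> k > perm_at \<tau> j"
    proof
      fix k assume k: "k \<in> {1..<j}"
      consider "k \<le> i" | "k = Suc i" | "Suc i < k" by linarith
      then show "perm_at \<tau> k > perm_at \<tau> j"
      proof cases
        case 1 then show ?thesis
          using H[rule_format, of k] k assms by (simp add: perm_at_before perm_at_after)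
      next
        case 2 then show ?thesis
          using assms that perm_at_less_max[of "j - 1"] by (simp add: perm_at_inserted perm_at_after)
      next
        case 3
        then have "k - 1 \<in> {1..<j - 1}" using k by auto
        then show ?thesis
          using H 3 assms by (simp add: perm_at_after)
      qed
    qed
  qed
  then show ?thesis
    using assms by (auto simp: lr_min_set_def)
qed

lemma rl_min_set_before: "j \<le> i \<Longrightarrow> j \<in> rl_min_set \<tau> \<longleftrightarrow> j \<in> rl_min_set \<sigma>"
proof -
  assume j: "j \<le> i"
  have "(\<forall>k \<in> {j<..Suc n}. perm_at \<tau> k > perm_at \<tau> j) \<longleftrightarrow>
        (\<forall>k \<in> {j<..n}. perm_at \<sigma> k > perm_at \<sigma> j)"
  proof
    assume H: "\<forall>k \<in> {j<..Suc n}. perm_at \<tau> k > perm_at \<tau> j"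
    show "\<forall>k \<in> {j<..n}. perm_at \<sigma> k > perm_at \<sigma> j"
    proof
      fix k assume k: "k \<in> {j<..n}"
      show "perm_at \<sigma> k > perm_at \<sigma> j"
      proof (cases "k \<le> i")
        case True then show ?thesis
          using H[rule_format, of k] k j by (simp add: perm_at_before)
      next
        case False then show ?thesis
          using H[rule_format, of "Suc k"] k j by (simp add: perm_at_before perm_at_after)
      qed
    qed
  next
    assume H: "\<forall>k \<in> {j<..n}. perm_at \<sigma> k > perm_at \<sigma> j"
    show "\<forall>k \<in> {j<..Suc n}. perm_at \<tau> k > perm_at \<tau> j"
    proof
      fix k assume k: "k \<in> {j<..Suc n}"
      consider "k \<le> i" | "k = Suc i" | "Suc i < k" by linarith
      then show "perm_at \<tau> k > perm_at \<tau> j"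
      proof cases
        case 1 then show ?thesis
          using H[rule_format, of k] k j pos by (simp add: perm_at_before)
      next
        case 2 then show ?thesis
          using j pos perm_at_less_max[of j] by (simp add: perm_at_before perm_at_inserted)
      next
        case 3
        then have "k - 1 \<in> {j<..n}" using k j by auto
        then show ?thesis
          using H 3 j by (simp add: perm_at_before perm_at_after)
      qed
    qed
  qed
  then show ?thesis
    using j pos by (auto simp: rl_min_set_def)
qed

lemma rl_min_set_inserted: "Suc i \<in> rl_min_set \<tau> \<longleftrightarrow> i = n"
proof
  assume "Suc i \<in> rl_min_set \<tau>"
  then have min: "\<forall>k \<in> {Suc i<..Suc n}. perm_at \<tau> k > perm_at \<tau> (Suc i)"
    by (simp add: rl_min_set_def)
  show "i = n"
  proof (rule ccontr)
    assume "i \<noteq> n"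
    then have "perm_at \<tau> (Suc (Suc i)) > perm_at \<tau> (Suc i)" using min pos by simp
    moreover have "perm_at \<tau> (Suc (Suc i)) < Suc n"
      using \<open>i \<noteq> n\<close> pos perm_at_less_max[of "Suc i"] by (simp add: perm_at_after)
    ultimately show False by (simp add: perm_at_inserted)
  qed
qed (simp add: rl_min_set_def)

lemma rl_min_set_after:
  assumes "Suc i < j"
  shows "j \<in> rl_min_set \<tau> \<longleftrightarrow> j - 1 \<in> rl_min_set \<sigma>"
proof -
  have "(\<forall>k \<in> {j<..Suc n}. perm_at \<tau> k > perm_at \<tau> j) \<longleftrightarrow>
        (\<forall>k \<in> {j - 1<..n}. perm_at \<sigma> k > perm_at \<sigma> (j - 1))"
  proof
    assume H: "\<forall>k \<in> {j<..Suc n}. perm_at \<tau> k > perm_at \<tau> j"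
    show "\<forall>k \<in> {j - 1<..n}. perm_at \<sigma> k > perm_at \<sigma> (j - 1)"
    proof
      fix k assume "k \<in> {j - 1<..n}"
      then have "Suc k \<in> {j<..Suc n}" using assms by auto
      then show "perm_at \<sigma> k > perm_at \<sigma> (j - 1)"
        using H assms by (fastforce simp: perm_at_after)
    qed
  next
    assume H: "\<forall>k \<in> {j - 1<..n}. perm_at \<sigma> k > perm_at \<sigma> (j - 1)"
    show "\<forall>k \<in> {j<..Suc n}. perm_at \<tau> k > perm_at \<tau> j"
    proof
      fix k assume "k \<in> {j<..Suc n}"
      then have "k - 1 \<in> {j - 1<..n}" "Suc i < k" using assms by auto
      then show "perm_at \<tau> k > perm_at \<tau> j"
        using H assms by (simp add: perm_at_after)
    qed
  qed
  then show ?thesis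
    using assms by (auto simp: rl_min_set_def)
qed

lemma lr_min_set_insert:
  "lr_min_set \<tau> = {j \<in> lr_min_set \<sigma>. j < Suc i} \<union> (if i = 0 then {Suc i} else {})
     \<union> Suc ` {j \<in> lr_min_set \<sigma>. i < j}"
proof (rule set_eqI)
  fix j
  consider "j \<le> i" | "j = Suc i" | "Suc i < j" by linarith
  then show "j \<in> lr_min_set \<tau> \<longleftrightarrow> j \<in> {j \<in> lr_min_set \<sigma>. j < Suc i} \<union> (if i = 0 then {Suc i} else {})
     \<union> Suc ` {j \<in> lr_min_set \<sigma>. i < j}"
    by cases (auto simp: lr_min_set_before lr_min_set_inserted lr_min_set_after mem_Suc_image_iff)
qed

lemma rl_min_set_insert:
  "rl_min_set \<tau> = {j \<in> rl_min_set \<sigma>. j < Suc i} \<union> (if i = n then {Suc i} else {})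
     \<union> Suc ` {j \<in> rl_min_set \<sigma>. i < j}"
proof (rule set_eqI)
  fix j
  consider "j \<le> i" | "j = Suc i" | "Suc i < j" by linarith
  then show "j \<in> rl_min_set \<tau> \<longleftrightarrow> j \<in> {j \<in> rl_min_set \<sigma>. j < Suc i} \<union> (if i = n then {Suc i} else {})
     \<union> Suc ` {j \<in> rl_min_set \<sigma>. i < j}"
    by cases (auto simp: rl_min_set_before rl_min_set_inserted rl_min_set_after mem_Suc_image_iff)
qed

lemma lpk_insert: "lpk \<tau> + card (left_peak_set \<sigma> \<inter> {i, Suc i}) = lpk \<sigma> + of_bool (i < n)"
proof -
  have "finite (left_peak_set \<sigma>)" by (simp add: left_peak_set_def)
  from card_splice[OF this, of "if i < n then {Suc i} else {}" i "Suc i"]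
  have "lpk \<tau> + card {j \<in> left_peak_set \<sigma>. i \<le> j \<and> j \<le> Suc i} = lpk \<sigma> + of_bool (i < n)"
    unfolding lpk_eq_card_left_peak_set left_peak_set_insert by simp
  moreover have "{j \<in> left_peak_set \<sigma>. i \<le> j \<and> j \<le> Suc i} = left_peak_set \<sigma> \<inter> {i, Suc i}"
    by auto
  ultimately show ?thesis by simp
qed

lemma LRmin_insert: "LRmin \<tau> = LRmin \<sigma> + of_bool (i = 0)"
proof -
  have "card (lr_min_set \<tau>) + card {j \<in> lr_min_set \<sigma>. Suc i \<le> j \<and> j \<le> i}
      = card (lr_min_set \<sigma>) + card (if i = 0 then {Suc i} else {})"
    unfolding lr_min_set_insert by (rule card_splice) (auto simp: lr_min_set_def)
  moreover have "{j \<in> lr_min_set \<sigma>. Suc i \<le> j \<and> j \<le> i} = {}" by auto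
  ultimately show ?thesis
    by (simp add: LRmin_eq_card_lr_min_set)
qed

lemma RLmin_insert: "RLmin \<tau> = RLmin \<sigma> + of_bool (i = n)"
proof -
  have "card (rl_min_set \<tau>) + card {j \<in> rl_min_set \<sigma>. Suc i \<le> j \<and> j \<le> i}
      = card (rl_min_set \<sigma>) + card (if i = n then {Suc i} else {})"
    unfolding rl_min_set_insert by (rule card_splice) (auto simp: rl_min_set_def)
  moreover have "{j \<in> rl_min_set \<sigma>. Suc i \<le> j \<and> j \<le> i} = {}" by auto
  ultimately show ?thesis
    by (simp add: RLmin_eq_card_rl_min_set)
qed

end

definition eulerian_weight :: "real \<Rightarrow> nat list \<Rightarrow> real \<Rightarrow> real \<Rightarrow> real" where
  "eulerian_weight \<beta> \<sigma> x y = x ^ (des \<sigma> + 1) * y ^ asc \<sigma> * \<beta> ^ LRmin \<sigma>"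

definition peak_weight :: "real \<Rightarrow> nat \<Rightarrow> nat list \<Rightarrow> real \<Rightarrow> real \<Rightarrow> real" where
  "peak_weight \<beta> n \<sigma> x y = (x * y) ^ lpk \<sigma> * ((x + y) / 2) ^ (n - 2 * lpk \<sigma>) * \<beta> ^ RLmin \<sigma>"

lemma eulerian_weight_insert:
  assumes \<sigma>: "\<sigma> \<in> permutations_of_set {1..n}" and i: "i \<le> n" and n: "1 \<le> n"
  shows "eulerian_weight \<beta> (insert_at i (Suc n) \<sigma>) x y = eulerian_weight \<beta> \<sigma> x y *
    (if i = 0 then \<beta> * x else if i \<in> descent_set \<sigma> \<or> i = n then y else x)"
proof -
  interpret max_insertion \<sigma> n i using \<sigma> i by unfold_locales
  have D: "0 \<notin> descent_set \<sigma>" "n \<notin> descent_set \<sigma>"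
    by (auto simp: descent_set_def)
  have A: "i \<in> ascent_set \<sigma> \<longleftrightarrow> 0 < i \<and> i < n \<and> i \<notin> descent_set \<sigma>"
    using ascent_set_eq_diff_descent_set[OF \<sigma>] by auto
  consider "i = 0" | "0 < i" "i < n" "i \<in> descent_set \<sigma>" | "0 < i" "i < n" "i \<notin> descent_set \<sigma>"
    | "0 < i" "i = n"
    using i n by linarith
  then show ?thesis
  proof cases
    case 1
    then have "des \<tau> = Suc (des \<sigma>)" "asc \<tau> = asc \<sigma>" "LRmin \<tau> = Suc (LRmin \<sigma>)"
      using des_insert asc_insert LRmin_insert n D A by auto
    with 1 show ?thesis by (simp add: eulerian_weight_def)
  next
    case 2
    then have "des \<tau> = des \<sigma>" "asc \<tau> = Suc (asc \<sigma>)" "LRmin \<tau> = LRmin \<sigma>"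
      using des_insert asc_insert LRmin_insert A by auto
    with 2 show ?thesis by (simp add: eulerian_weight_def)
  next
    case 3
    then have "des \<tau> = Suc (des \<sigma>)" "asc \<tau> = asc \<sigma>" "LRmin \<tau> = LRmin \<sigma>"
      using des_insert asc_insert LRmin_insert A by auto
    with 3 show ?thesis by (simp add: eulerian_weight_def)
  next
    case 4
    then have "des \<tau> = des \<sigma>" "asc \<tau> = Suc (asc \<sigma>)" "LRmin \<tau> = LRmin \<sigma>"
      using des_insert asc_insert LRmin_insert D A by auto
    with 4 show ?thesis by (simp add: eulerian_weight_def)
  qed
qed

lemma eulerian_weight_insert_sum:
  assumes \<sigma>: "\<sigma> \<in> permutations_of_set {1..n}" and n: "1 \<le> n"
  shows "(\<Sum>i\<le>n. eulerian_weight \<beta> (insert_at i (Suc n) \<sigma>) x y)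
       = eulerian_weight \<beta> \<sigma> x y * (\<beta> * x + y * of_nat (des \<sigma> + 1) + x * of_nat (asc \<sigma>))"
proof -
  let ?w = "eulerian_weight \<beta> \<sigma> x y"
  have D: "descent_set \<sigma> \<subseteq> {1..<n}"
    using length_permutation[OF \<sigma>] by (auto simp: descent_set_def)
  note A = ascent_set_eq_diff_descent_set[OF \<sigma>]
  have "{..n} = insert 0 (insert n {1..<n})"
    using n by auto
  then have "(\<Sum>i\<le>n. eulerian_weight \<beta> (insert_at i (Suc n) \<sigma>) x y)
      = ?w * (\<beta> * x) + ?w * y + (\<Sum>i\<in>{1..<n}. ?w * (if i \<in> descent_set \<sigma> then y else x))"
    using n by (simp add: eulerian_weight_insert[OF \<sigma> _ n] D subset_iff)
  moreover have "(\<Sum>i\<in>{1..<n}. if i \<in> descent_set \<sigma> then y else x)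
      = y * card (descent_set \<sigma>) + x * card (ascent_set \<sigma>)"
    unfolding sum.If_cases[OF finite_atLeastLessThan] A
    using D by (simp add: Int_absorb1 Diff_eq)
  ultimately show ?thesis
    by (simp add: sum_distrib_left[symmetric] des_eq_card_descent_set asc_eq_card_ascent_set
        algebra_simps)
qed

lemma peak_weight_insert:
  assumes \<sigma>: "\<sigma> \<in> permutations_of_set {1..n}" and i: "i < n"
  shows "peak_weight \<beta> (Suc n) (insert_at i (Suc n) \<sigma>) x y =
    (if left_peak_set \<sigma> \<inter> {i, Suc i} = {}
     then (x * y) ^ (lpk \<sigma> + 1) * ((x + y) / 2) ^ (n - 2 * lpk \<sigma> - 1) * \<beta> ^ RLmin \<sigma>
     else (x * y) ^ lpk \<sigma> * ((x + y) / 2) ^ (n - 2 * lpk \<sigma> + 1) * \<beta> ^ RLmin \<sigma>)"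
proof -
  interpret max_insertion \<sigma> n i using \<sigma> i by unfold_locales simp_all
  have lpk: "lpk \<tau> + card (left_peak_set \<sigma> \<inter> {i, Suc i}) = lpk \<sigma> + 1"
    and RL: "RLmin \<tau> = RLmin \<sigma>"
    using lpk_insert RLmin_insert i by simp_all
  have card_le: "card (left_peak_set \<sigma> \<inter> {i, Suc i}) \<le> 1"
    by (rule card_left_peak_set_consecutive_le)
  have two_lpk: "2 * lpk \<sigma> \<le> n"
    using two_lpk_le_length[of \<sigma>] by simp
  show ?thesis
  proof (cases "left_peak_set \<sigma> \<inter> {i, Suc i} = {}")
    case True
    then have "lpk \<tau> = lpk \<sigma> + 1" using lpk by simp
    moreover have "Suc n - 2 * (lpk \<sigma> + 1) = n - 2 * lpk \<sigma> - 1" by simp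
    ultimately show ?thesis using True RL by (simp add: peak_weight_def)
  next
    case False
    then have "card (left_peak_set \<sigma> \<inter> {i, Suc i}) \<noteq> 0" by simp
    then have "lpk \<tau> = lpk \<sigma>"
      using lpk card_le by linarith
    moreover have "Suc n - 2 * lpk \<sigma> = n - 2 * lpk \<sigma> + 1"
      using two_lpk by simp
    ultimately show ?thesis
      unfolding if_not_P[OF False] using RL by (simp add: peak_weight_def)
  qed
qed

lemma peak_weight_insert_last:
  assumes \<sigma>: "\<sigma> \<in> permutations_of_set {1..n}"
  shows "peak_weight \<beta> (Suc n) (insert_at n (Suc n) \<sigma>) x y = \<beta> * ((x + y) / 2) * peak_weight \<beta> n \<sigma> x y"
proof -
  interpret max_insertion \<sigma> n n using \<sigma> by unfold_locales simp_all
  have "left_peak_set \<sigma> \<inter> {n, Suc n} = {}"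
    by (auto simp: left_peak_set_def)
  then have "lpk \<tau> = lpk \<sigma>" "RLmin \<tau> = Suc (RLmin \<sigma>)"
    using lpk_insert RLmin_insert by simp_all
  moreover have "Suc n - 2 * lpk \<sigma> = Suc (n - 2 * lpk \<sigma>)"
    using two_lpk_le_length[of \<sigma>] by simp
  ultimately show ?thesis by (simp add: peak_weight_def)
qed

lemma peak_weight_insert_sum:
  assumes \<sigma>: "\<sigma> \<in> permutations_of_set {1..n}"
  shows "(\<Sum>i\<le>n. peak_weight \<beta> (Suc n) (insert_at i (Suc n) \<sigma>) x y)
       = \<beta> * ((x + y) / 2) * peak_weight \<beta> n \<sigma> x y
         + (of_nat (2 * lpk \<sigma>) * (x * y) ^ lpk \<sigma> * ((x + y) / 2) ^ (n - 2 * lpk \<sigma> + 1)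
            + of_nat (n - 2 * lpk \<sigma>) * (x * y) ^ (lpk \<sigma> + 1) * ((x + y) / 2) ^ (n - 2 * lpk \<sigma> - 1))
           * \<beta> ^ RLmin \<sigma>"
proof -
  define X Y where "X = (x * y) ^ lpk \<sigma> * ((x + y) / 2) ^ (n - 2 * lpk \<sigma> + 1) * \<beta> ^ RLmin \<sigma>"
    and "Y = (x * y) ^ (lpk \<sigma> + 1) * ((x + y) / 2) ^ (n - 2 * lpk \<sigma> - 1) * \<beta> ^ RLmin \<sigma>"
  (* Each insertion position i < n creates one left peak and destroys c i of them; every left peak
     is destroyed by exactly two positions. *)
  define c where "c i = card (left_peak_set \<sigma> \<inter> {i, Suc i})" for i
  have P: "left_peak_set \<sigma> \<subseteq> {1..<n}"
    using length_permutation[OF \<sigma>] by (auto simp: left_peak_set_def)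
  have "peak_weight \<beta> (Suc n) (insert_at i (Suc n) \<sigma>) x y = Y + of_nat (c i) * (X - Y)" if "i < n" for i
    using peak_weight_insert[OF \<sigma> that] card_left_peak_set_consecutive_le[of \<sigma> i]
    by (cases "c i") (auto simp: c_def X_def Y_def)
  moreover have "(\<Sum>i<n. of_nat (c i) :: real) = of_nat (2 * lpk \<sigma>)"
    using sum_card_Int_consecutive[OF P] unfolding c_def lpk_eq_card_left_peak_set
    by (metis of_nat_sum)
  ultimately have "(\<Sum>i<n. peak_weight \<beta> (Suc n) (insert_at i (Suc n) \<sigma>) x y)
      = of_nat n * Y + of_nat (2 * lpk \<sigma>) * (X - Y)"
    by (simp add: sum.distrib sum_distrib_right[symmetric])
  also have "\<dots> = of_nat (2 * lpk \<sigma>) * X + of_nat (n - 2 * lpk \<sigma>) * Y"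
    using two_lpk_le_length[of \<sigma>] length_permutation[OF \<sigma>]
    by (simp add: of_nat_diff algebra_simps)
  finally show ?thesis
    using peak_weight_insert_last[OF \<sigma>]
    by (simp add: lessThan_Suc_atMost[symmetric] X_def Y_def algebra_simps)
qed

(* The operator d/dx + d/dy, as the derivative in the direction (1, 1). *)
definition diag_deriv :: "(real \<Rightarrow> real \<Rightarrow> real) \<Rightarrow> real \<Rightarrow> real \<Rightarrow> real" where
  "diag_deriv f x y = deriv (\<lambda>t. f (x + t) (y + t)) 0"

lemma diag_deriv_eqI:
  "((\<lambda>t. f (x + t) (y + t)) has_real_derivative D) (at 0) \<Longrightarrow> diag_deriv f x y = D"
  by (simp add: diag_deriv_def DERIV_imp_deriv)

(* A_0 = 1 by convention: the empty permutation alone would contribute x. *)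
definition eulerian_poly :: "real \<Rightarrow> nat \<Rightarrow> real \<Rightarrow> real \<Rightarrow> real" where
  "eulerian_poly \<beta> k x y =
     (if k = 0 then 1 else \<Sum>\<sigma>\<in>permutations_of_set {1..k}. eulerian_weight \<beta> \<sigma> x y)"

definition peak_poly :: "real \<Rightarrow> nat \<Rightarrow> real \<Rightarrow> real \<Rightarrow> real" where
  "peak_poly \<beta> n x y = (\<Sum>\<sigma>\<in>permutations_of_set {1..n}. peak_weight \<beta> n \<sigma> x y)"

definition binomial_eulerian_poly :: "real \<Rightarrow> nat \<Rightarrow> real \<Rightarrow> real \<Rightarrow> real" where
  "binomial_eulerian_poly \<beta> n x y =
     (\<Sum>k\<le>n. of_nat (n choose k) * (\<beta> * (y - x) / 2) ^ (n - k) * eulerian_poly \<beta> k x y)"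

lemma eulerian_weight_has_diag_deriv:
  "((\<lambda>t. eulerian_weight \<beta> \<sigma> (x + t) (y + t)) has_real_derivative
     (of_nat (des \<sigma> + 1) * x ^ des \<sigma> * y ^ asc \<sigma> + x ^ (des \<sigma> + 1) * (of_nat (asc \<sigma>) * y ^ (asc \<sigma> - 1)))
       * \<beta> ^ LRmin \<sigma>) (at 0)"
  unfolding eulerian_weight_def by (rule derivative_eq_intros refl)+ simp

lemma eulerian_poly_has_diag_deriv_sum:
  assumes "0 < k"
  shows "((\<lambda>t. eulerian_poly \<beta> k (x + t) (y + t)) has_real_derivative
     (\<Sum>\<sigma>\<in>permutations_of_set {1..k}. (of_nat (des \<sigma> + 1) * x ^ des \<sigma> * y ^ asc \<sigma>
        + x ^ (des \<sigma> + 1) * (of_nat (asc \<sigma>) * y ^ (asc \<sigma> - 1))) * \<beta> ^ LRmin \<sigma>)) (at 0)"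
proof -
  have "(\<lambda>t. eulerian_poly \<beta> k (x + t) (y + t)) =
      (\<lambda>t. \<Sum>\<sigma>\<in>permutations_of_set {1..k}. eulerian_weight \<beta> \<sigma> (x + t) (y + t))"
    using assms by (simp add: eulerian_poly_def)
  then show ?thesis
    by (simp only:) (intro DERIV_sum eulerian_weight_has_diag_deriv)
qed

lemma eulerian_poly_has_diag_deriv:
  "((\<lambda>t. eulerian_poly \<beta> k (x + t) (y + t)) has_real_derivative diag_deriv (eulerian_poly \<beta> k) x y) (at 0)"
proof (cases "k = 0")
  case True
  then have "((\<lambda>t. eulerian_poly \<beta> k (x + t) (y + t)) has_real_derivative 0) (at 0)"
    by (simp add: eulerian_poly_def)
  then show ?thesis by (simp add: diag_deriv_eqI)
next
  case False
  then show ?thesis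
    using diag_deriv_eqI[where f = "eulerian_poly \<beta> k", OF eulerian_poly_has_diag_deriv_sum]
      eulerian_poly_has_diag_deriv_sum by simp
qed

lemma eulerian_poly_diag_deriv:
  assumes "0 < k"
  shows "x * y * diag_deriv (eulerian_poly \<beta> k) x y =
    (\<Sum>\<sigma>\<in>permutations_of_set {1..k}.
       eulerian_weight \<beta> \<sigma> x y * (y * of_nat (des \<sigma> + 1) + x * of_nat (asc \<sigma>)))"
proof -
  have monomial: "x * y * ((of_nat (d + 1) * x ^ d * y ^ a + x ^ (d + 1) * (of_nat a * y ^ (a - 1))) * c)
      = x ^ (d + 1) * y ^ a * c * (y * of_nat (d + 1) + x * of_nat a)" for d a c
    by (cases a) (simp_all add: algebra_simps)
  show ?thesis
    unfolding diag_deriv_eqI[where f = "eulerian_poly \<beta> k", OF eulerian_poly_has_diag_deriv_sum[OF assms]]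
      sum_distrib_left
    by (rule sum.cong[OF refl]) (simp only: monomial eulerian_weight_def)
qed

lemma eulerian_poly_Suc:
  "eulerian_poly \<beta> (Suc k) x y = \<beta> * x * eulerian_poly \<beta> k x y + x * y * diag_deriv (eulerian_poly \<beta> k) x y"
proof (cases "k = 0")
  case True
  have "lr_min_set [1] = {1}"
    by (auto simp: lr_min_set_def)
  then have "des [1] = 0" "asc [1] = 0" "LRmin [1] = 1"
    by (simp_all add: des_def asc_def LRmin_eq_card_lr_min_set)
  moreover have "diag_deriv (eulerian_poly \<beta> 0) x y = 0"
    by (rule diag_deriv_eqI) (simp add: eulerian_poly_def)
  ultimately show ?thesis
    using True by (simp add: eulerian_poly_def eulerian_weight_def)
next
  case False
  have "eulerian_poly \<beta> (Suc k) x y =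
      (\<Sum>\<sigma>\<in>permutations_of_set {1..k}. \<Sum>i\<le>k. eulerian_weight \<beta> (insert_at i (Suc k) \<sigma>) x y)"
    unfolding eulerian_poly_def by (simp only: sum_permutations_insert_max) simp
  also have "\<dots> = (\<Sum>\<sigma>\<in>permutations_of_set {1..k}.
      eulerian_weight \<beta> \<sigma> x y * (\<beta> * x + y * of_nat (des \<sigma> + 1) + x * of_nat (asc \<sigma>)))"
    using False by (intro sum.cong refl eulerian_weight_insert_sum) auto
  also have "\<dots> = (\<Sum>\<sigma>\<in>permutations_of_set {1..k}. \<beta> * x * eulerian_weight \<beta> \<sigma> x y)
      + (\<Sum>\<sigma>\<in>permutations_of_set {1..k}.
           eulerian_weight \<beta> \<sigma> x y * (y * of_nat (des \<sigma> + 1) + x * of_nat (asc \<sigma>)))"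
    by (simp add: sum.distrib[symmetric] algebra_simps)
  also have "\<dots> = \<beta> * x * eulerian_poly \<beta> k x y + x * y * diag_deriv (eulerian_poly \<beta> k) x y"
    using False by (simp only: eulerian_poly_diag_deriv sum_distrib_left[symmetric]) (simp add: eulerian_poly_def)
  finally show ?thesis .
qed

lemma peak_weight_has_diag_deriv:
  "((\<lambda>t. peak_weight \<beta> n \<sigma> (x + t) (y + t)) has_real_derivative
     (of_nat (lpk \<sigma>) * (x * y) ^ (lpk \<sigma> - 1) * (x + y) * ((x + y) / 2) ^ (n - 2 * lpk \<sigma>)
      + (x * y) ^ lpk \<sigma> * (of_nat (n - 2 * lpk \<sigma>) * ((x + y) / 2) ^ (n - 2 * lpk \<sigma> - 1)))
     * \<beta> ^ RLmin \<sigma>) (at 0)"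
proof -
  have "((\<lambda>t. (x + t) * (y + t)) has_real_derivative x + y) (at 0)"
    by (auto intro!: derivative_eq_intros)
  moreover have "((\<lambda>t. ((x + t) + (y + t)) / 2) has_real_derivative 1) (at 0)"
    by (auto intro!: derivative_eq_intros)
  ultimately show ?thesis
    unfolding peak_weight_def
    by (rule DERIV_cong[OF DERIV_cmult_right[OF DERIV_mult[OF DERIV_power DERIV_power]]])
      (simp add: algebra_simps)
qed

lemma peak_poly_diag_deriv:
  "x * y * diag_deriv (peak_poly \<beta> n) x y =
    (\<Sum>\<sigma>\<in>permutations_of_set {1..n}.
       (of_nat (2 * lpk \<sigma>) * (x * y) ^ lpk \<sigma> * ((x + y) / 2) ^ (n - 2 * lpk \<sigma> + 1)
        + of_nat (n - 2 * lpk \<sigma>) * (x * y) ^ (lpk \<sigma> + 1) * ((x + y) / 2) ^ (n - 2 * lpk \<sigma> - 1))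
       * \<beta> ^ RLmin \<sigma>)"
proof -
  have deriv: "((\<lambda>t. peak_poly \<beta> n (x + t) (y + t)) has_real_derivative
     (\<Sum>\<sigma>\<in>permutations_of_set {1..n}.
       (of_nat (lpk \<sigma>) * (x * y) ^ (lpk \<sigma> - 1) * (x + y) * ((x + y) / 2) ^ (n - 2 * lpk \<sigma>)
        + (x * y) ^ lpk \<sigma> * (of_nat (n - 2 * lpk \<sigma>) * ((x + y) / 2) ^ (n - 2 * lpk \<sigma> - 1)))
       * \<beta> ^ RLmin \<sigma>)) (at 0)"
    unfolding peak_poly_def by (intro DERIV_sum peak_weight_has_diag_deriv)
  have monomial: "v * ((of_nat a * v ^ (a - 1) * s * (s / 2) ^ b + v ^ a * (of_nat b * (s / 2) ^ (b - 1))) * c)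
      = (of_nat (2 * a) * v ^ a * (s / 2) ^ (b + 1) + of_nat b * v ^ (a + 1) * (s / 2) ^ (b - 1)) * c"
    for v s c :: real and a b :: nat
    by (cases a; cases b) (simp_all add: field_simps)
  show ?thesis
    unfolding diag_deriv_eqI[where f = "peak_poly \<beta> n", OF deriv] sum_distrib_left
    by (rule sum.cong[OF refl]) (rule monomial)
qed

lemma peak_poly_Suc:
  "peak_poly \<beta> (Suc n) x y = \<beta> * ((x + y) / 2) * peak_poly \<beta> n x y + x * y * diag_deriv (peak_poly \<beta> n) x y"
proof -
  have "peak_poly \<beta> (Suc n) x y =
      (\<Sum>\<sigma>\<in>permutations_of_set {1..n}. \<Sum>i\<le>n. peak_weight \<beta> (Suc n) (insert_at i (Suc n) \<sigma>) x y)"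
    unfolding peak_poly_def by (rule sum_permutations_insert_max)
  also have "\<dots> = (\<Sum>\<sigma>\<in>permutations_of_set {1..n}. \<beta> * ((x + y) / 2) * peak_weight \<beta> n \<sigma> x y
      + (of_nat (2 * lpk \<sigma>) * (x * y) ^ lpk \<sigma> * ((x + y) / 2) ^ (n - 2 * lpk \<sigma> + 1)
         + of_nat (n - 2 * lpk \<sigma>) * (x * y) ^ (lpk \<sigma> + 1) * ((x + y) / 2) ^ (n - 2 * lpk \<sigma> - 1))
        * \<beta> ^ RLmin \<sigma>)"
    by (rule sum.cong[OF refl], rule peak_weight_insert_sum)
  also have "\<dots> = \<beta> * ((x + y) / 2) * peak_poly \<beta> n x y + x * y * diag_deriv (peak_poly \<beta> n) x y"
    by (simp only: sum.distrib peak_poly_diag_deriv peak_poly_def sum_distrib_left)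
  finally show ?thesis .
qed

lemma binomial_sum_Suc:
  fixes c :: "'a::comm_semiring_1"
  shows "(\<Sum>k\<le>Suc n. of_nat (Suc n choose k) * c ^ (Suc n - k) * f k)
       = c * (\<Sum>k\<le>n. of_nat (n choose k) * c ^ (n - k) * f k)
         + (\<Sum>k\<le>n. of_nat (n choose k) * c ^ (n - k) * f (Suc k))"
proof -
  define g where "g k = c ^ (Suc n - k) * f k" for k
  have "(\<Sum>k\<le>Suc n. of_nat (Suc n choose k) * g k)
      = g 0 + (\<Sum>k\<le>n. of_nat (Suc n choose Suc k) * g (Suc k))"
    by (subst sum.atMost_Suc_shift) simp
  also have "\<dots> = g 0 + (\<Sum>k\<le>n. of_nat (n choose Suc k) * g (Suc k))
      + (\<Sum>k\<le>n. of_nat (n choose k) * g (Suc k))"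
    by (simp add: sum.distrib algebra_simps)
  also have "g 0 + (\<Sum>k\<le>n. of_nat (n choose Suc k) * g (Suc k)) = (\<Sum>k\<le>Suc n. of_nat (n choose k) * g k)"
    by (subst sum.atMost_Suc_shift) simp
  also have "\<dots> = (\<Sum>k\<le>n. of_nat (n choose k) * g k)"
    by (simp add: binomial_eq_0)
  also have "\<dots> = c * (\<Sum>k\<le>n. of_nat (n choose k) * c ^ (n - k) * f k)"
    unfolding sum_distrib_left by (rule sum.cong) (simp_all add: g_def Suc_diff_le algebra_simps)
  finally show ?thesis
    by (simp add: g_def mult.assoc)
qed

lemma binomial_eulerian_poly_diag_deriv:
  "diag_deriv (binomial_eulerian_poly \<beta> n) x y =
    (\<Sum>k\<le>n. of_nat (n choose k) * (\<beta> * (y - x) / 2) ^ (n - k) * diag_deriv (eulerian_poly \<beta> k) x y)"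
proof (rule diag_deriv_eqI)
  have "(\<lambda>t. binomial_eulerian_poly \<beta> n (x + t) (y + t)) =
      (\<lambda>t. \<Sum>k\<le>n. of_nat (n choose k) * (\<beta> * (y - x) / 2) ^ (n - k) * eulerian_poly \<beta> k (x + t) (y + t))"
    by (simp add: binomial_eulerian_poly_def)
  then show "((\<lambda>t. binomial_eulerian_poly \<beta> n (x + t) (y + t)) has_real_derivative
      (\<Sum>k\<le>n. of_nat (n choose k) * (\<beta> * (y - x) / 2) ^ (n - k) * diag_deriv (eulerian_poly \<beta> k) x y)) (at 0)"
    by (simp only:) (intro DERIV_sum DERIV_cmult eulerian_poly_has_diag_deriv)
qed

lemma binomial_eulerian_poly_Suc:
  "binomial_eulerian_poly \<beta> (Suc n) x y =
    \<beta> * ((x + y) / 2) * binomial_eulerian_poly \<beta> n x y + x * y * diag_deriv (binomial_eulerian_poly \<beta> n) x y"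
proof -
  define c where "c = \<beta> * (y - x) / 2"
  have "binomial_eulerian_poly \<beta> (Suc n) x y = c * binomial_eulerian_poly \<beta> n x y
      + (\<Sum>k\<le>n. of_nat (n choose k) * c ^ (n - k) * eulerian_poly \<beta> (Suc k) x y)"
    unfolding binomial_eulerian_poly_def c_def by (rule binomial_sum_Suc)
  also have "(\<Sum>k\<le>n. of_nat (n choose k) * c ^ (n - k) * eulerian_poly \<beta> (Suc k) x y)
      = \<beta> * x * binomial_eulerian_poly \<beta> n x y + x * y * diag_deriv (binomial_eulerian_poly \<beta> n) x y"
    by (simp add: eulerian_poly_Suc binomial_eulerian_poly_def binomial_eulerian_poly_diag_deriv c_def
        sum_distrib_left sum.distrib algebra_simps)
  finally have "binomial_eulerian_poly \<beta> (Suc n) x y =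
      (c + \<beta> * x) * binomial_eulerian_poly \<beta> n x y + x * y * diag_deriv (binomial_eulerian_poly \<beta> n) x y"
    by (simp add: algebra_simps)
  moreover have "c + \<beta> * x = \<beta> * ((x + y) / 2)"
    by (simp add: c_def field_simps)
  ultimately show ?thesis by simp
qed

lemma peak_poly_eq_binomial_eulerian_poly: "peak_poly \<beta> n = binomial_eulerian_poly \<beta> n"
proof (induction n)
  case 0
  have "lpk [] = 0" "RLmin [] = 0"
    by (simp_all add: lpk_def RLmin_def)
  then show ?case
    by (simp add: fun_eq_iff peak_poly_def peak_weight_def binomial_eulerian_poly_def eulerian_poly_def)
next
  case (Suc n)
  show ?case
    unfolding fun_eq_iff peak_poly_Suc binomial_eulerian_poly_Suc Suc.IH by simp
qed

theorem theorem6p5: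
  fixes x y \<beta> :: real and n :: nat
  assumes "n \<ge> 1"
  shows "(\<Sum>\<sigma>\<in>permutations_of_set {1..n}.
            (x * y) ^ lpk \<sigma> * ((x + y) / 2) ^ (n - 2 * lpk \<sigma>) * \<beta> ^ RLmin \<sigma>)
       = (\<Sum>k = 1..n. of_nat (n choose k) * (\<beta> * (y - x)) ^ (n - k) / 2 ^ (n - k) *
            (\<Sum>\<sigma>\<in>permutations_of_set {1..k}.
               x ^ (des \<sigma> + 1) * y ^ asc \<sigma> * \<beta> ^ LRmin \<sigma>))
         + (\<beta> * (y - x) / 2) ^ n"
  (* the identity holds for n = 0 as well *)
proof -
  have "{..n} = insert 0 {1..n}" by auto
  then have "binomial_eulerian_poly \<beta> n x y = (\<beta> * (y - x) / 2) ^ n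
      + (\<Sum>k = 1..n. of_nat (n choose k) * (\<beta> * (y - x) / 2) ^ (n - k) * eulerian_poly \<beta> k x y)"
    by (simp add: binomial_eulerian_poly_def eulerian_poly_def)
  also have "(\<Sum>k = 1..n. of_nat (n choose k) * (\<beta> * (y - x) / 2) ^ (n - k) * eulerian_poly \<beta> k x y)
     = (\<Sum>k = 1..n. of_nat (n choose k) * (\<beta> * (y - x)) ^ (n - k) / 2 ^ (n - k) *
          (\<Sum>\<sigma>\<in>permutations_of_set {1..k}. x ^ (des \<sigma> + 1) * y ^ asc \<sigma> * \<beta> ^ LRmin \<sigma>))"
    by (rule sum.cong) (simp_all add: eulerian_poly_def eulerian_weight_def power_divide)
  finally show ?thesis
    using peak_poly_eq_binomial_eulerian_poly[of \<beta> n]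
    by (simp add: fun_eq_iff peak_poly_def peak_weight_def)
qed

end
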